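(* Let $G_1$ and $G_2$ be connected graphs, where $G_1$ has at least two vertices. Then $$\chi_d^t(G_1\star G_2)\leq |V(G_1)|+|V(G_2)|.$$
   Context: All graphs are simple and finite. A total dominator coloring (TD-coloring) of a graph $G$ with no isolated vertex is a proper vertex coloring of $G$ in which every vertex of $G$ is adjacent to every vertex of some color class (a color class being the set of all vertices receiving a given color). The total dominator chromatic number (TDC-number) $\chi_d^t(G)$ is the minimum number of colors in a TD-coloring of $G$. The neighbourhood corona $G_1\star G_2$ of graphs $G_1$ and $G_2$ is the graph obtained by taking one copy of $G_1$ and $|V(G_1)|$ copies of $G_2$, and, for each $i$, joining every neighbour (in $G_1$) of the $i$-th vertex of $G_1$ to every vertex of the $i$-th copy of $G_2$. *)

theory Defs
  imports Main
begin

definition simple_graph :: "'a set \<Rightarrow> ('a \<Rightarrow> 'a \<Rightarrow> bool) \<Rightarrow> bool" where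
  "simple_graph V E \<longleftrightarrow> finite V \<and> (\<forall>u v. E u v \<longrightarrow> u \<in> V \<and> v \<in> V) \<and>
     (\<forall>u v. E u v \<longrightarrow> E v u) \<and> (\<forall>v. \<not> E v v)"

definition connected_graph :: "'a set \<Rightarrow> ('a \<Rightarrow> 'a \<Rightarrow> bool) \<Rightarrow> bool" where
  "connected_graph V E \<longleftrightarrow> simple_graph V E \<and> V \<noteq> {} \<and>
     (\<forall>u\<in>V. \<forall>v\<in>V. (\<lambda>x y. x \<in> V \<and> y \<in> V \<and> E x y)\<^sup>*\<^sup>* u v)"

definition td_coloring :: "'a set \<Rightarrow> ('a \<Rightarrow> 'a \<Rightarrow> bool) \<Rightarrow> ('a \<Rightarrow> nat) \<Rightarrow> bool" where
  "td_coloring V E c \<longleftrightarrow>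
     (\<forall>u\<in>V. \<forall>v\<in>V. E u v \<longrightarrow> c u \<noteq> c v) \<and>
     (\<forall>v\<in>V. \<exists>j\<in>c ` V. \<forall>u\<in>V. c u = j \<longrightarrow> E v u)"

definition tdc_number :: "'a set \<Rightarrow> ('a \<Rightarrow> 'a \<Rightarrow> bool) \<Rightarrow> nat" where
  "tdc_number V E = (LEAST k. \<exists>c. td_coloring V E c \<and> card (c ` V) = k)"

text \<open>Neighbourhood corona G1 \<star> G2: vertices Inl v (v in G1) and Inr (i, w)
(vertex w of the copy of G2 attached to vertex i of G1).\<close>
definition nc_vertices :: "'a set \<Rightarrow> 'b set \<Rightarrow> ('a + 'a \<times> 'b) set" where
  "nc_vertices V1 V2 = Inl ` V1 \<union> Inr ` (V1 \<times> V2)"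

fun nc_edges :: "('a \<Rightarrow> 'a \<Rightarrow> bool) \<Rightarrow> ('b \<Rightarrow> 'b \<Rightarrow> bool) \<Rightarrow>
    ('a + 'a \<times> 'b) \<Rightarrow> ('a + 'a \<times> 'b) \<Rightarrow> bool" where
  "nc_edges E1 E2 (Inl u) (Inl v) = E1 u v"
| "nc_edges E1 E2 (Inr (i, w)) (Inr (j, w')) = (i = j \<and> E2 w w')"
| "nc_edges E1 E2 (Inl u) (Inr (i, w)) = E1 u i"
| "nc_edges E1 E2 (Inr (i, w)) (Inl u) = E1 u i"

end

theory Submission
  imports Defs
begin

text \<open>Colour the vertices of \<open>G\<^sub>1\<close> injectively with colours below \<open>|V(G\<^sub>1)|\<close> and give every
  copy of \<open>G\<^sub>2\<close> the same injective colouring with the next \<open>|V(G\<^sub>2)|\<close> colours. Then the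
  colour class of each \<open>v \<in> V(G\<^sub>1)\<close> is \<open>{v}\<close>, and every vertex of \<open>G\<^sub>1 \<star> G\<^sub>2\<close> is
  adjacent to some vertex of \<open>G\<^sub>1\<close>: a vertex of \<open>G\<^sub>1\<close> or of the copy at \<open>i\<close> is adjacent to the
  neighbours of itself resp. of \<open>i\<close> in \<open>G\<^sub>1\<close>, which exist because \<open>G\<^sub>1\<close> is connected with at
  least two vertices.\<close>

lemma connected_graph_has_neighbour:
  assumes "connected_graph V E" "card V \<ge> 2" "v \<in> V"
  shows "\<exists>u\<in>V. E v u"
proof -
  have "\<not> V \<subseteq> {v}"
    using assms(2) card_mono[of "{v}" V] by auto
  then obtain x where x: "x \<in> V" "x \<noteq> v" by blast
  then have "(\<lambda>x y. x \<in> V \<and> y \<in> V \<and> E x y)\<^sup>*\<^sup>* v x"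
    using assms(1,3) by (simp add: connected_graph_def)
  then show ?thesis
    using x(2) by (cases rule: converse_rtranclpE) auto
qed

lemma td_coloring_if_adjacent_to_singleton_class:
  assumes "\<And>u v. u \<in> V \<Longrightarrow> v \<in> V \<Longrightarrow> E u v \<Longrightarrow> c u \<noteq> c v"
    and "\<And>v. v \<in> V \<Longrightarrow> \<exists>u\<in>V. E v u \<and> (\<forall>x\<in>V. c x = c u \<longrightarrow> x = u)"
  shows "td_coloring V E c"
  unfolding td_coloring_def
proof (intro conjI ballI impI)
  fix v assume "v \<in> V"
  with assms(2) obtain u where "u \<in> V" "E v u" "\<forall>x\<in>V. c x = c u \<longrightarrow> x = u"
    by blast
  then show "\<exists>j\<in>c ` V. \<forall>x\<in>V. c x = j \<longrightarrow> E v x" by blast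
qed (use assms(1) in blast)

lemma tdc_number_le_card_colours:
  assumes "td_coloring V E c"
  shows "tdc_number V E \<le> card (c ` V)"
  unfolding tdc_number_def by (rule Least_le) (use assms in blast)

lemma nc_edges_neighbour_in_base:
  assumes sym: "\<And>u v. E1 u v \<Longrightarrow> E1 v u"
    and nbr: "\<And>v. v \<in> V1 \<Longrightarrow> \<exists>u\<in>V1. E1 v u"
    and x: "x \<in> nc_vertices V1 V2"
  shows "\<exists>u\<in>V1. nc_edges E1 E2 x (Inl u)"
proof (cases x)
  case (Inl v)
  then show ?thesis using x nbr by (auto simp: nc_vertices_def)
next
  case (Inr p)
  then obtain i w where "x = Inr (i, w)" "i \<in> V1"
    using x by (auto simp: nc_vertices_def)
  then show ?thesis using nbr sym by fastforce
qed

definition corona_coloring :: "nat \<Rightarrow> ('a \<Rightarrow> nat) \<Rightarrow> ('b \<Rightarrow> nat) \<Rightarrow> 'a + 'a \<times> 'b \<Rightarrow> nat" where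
  "corona_coloring n f g x = (case x of Inl v \<Rightarrow> f v | Inr (_, w) \<Rightarrow> n + g w)"

lemma corona_coloring_simps [simp]:
  "corona_coloring n f g (Inl v) = f v"
  "corona_coloring n f g (Inr (i, w)) = n + g w"
  by (simp_all add: corona_coloring_def)

context
  fixes V1 :: "'a set" and V2 :: "'b set" and n :: nat
    and f :: "'a \<Rightarrow> nat" and g :: "'b \<Rightarrow> nat"
  assumes f_inj: "inj_on f V1" and f_range: "f ` V1 \<subseteq> {..<n}"
    and g_inj: "inj_on g V2"
begin

lemma corona_coloring_proper:
  assumes "\<And>v. \<not> E1 v v" "\<And>w. \<not> E2 w w"
    and "x \<in> nc_vertices V1 V2" "y \<in> nc_vertices V1 V2" "nc_edges E1 E2 x y"
  shows "corona_coloring n f g x \<noteq> corona_coloring n f g y"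
  using assms f_range inj_onD[OF f_inj] inj_onD[OF g_inj]
  by (fastforce simp: nc_vertices_def)

lemma corona_coloring_base_class_singleton:
  assumes "u \<in> V1" "x \<in> nc_vertices V1 V2"
    and "corona_coloring n f g x = corona_coloring n f g (Inl u)"
  shows "x = Inl u"
  using assms f_range by (auto simp: nc_vertices_def dest: inj_onD[OF f_inj])

lemma td_coloring_corona_coloring:
  assumes irrefl1: "\<And>v. \<not> E1 v v" and irrefl2: "\<And>w. \<not> E2 w w"
    and sym1: "\<And>u v. E1 u v \<Longrightarrow> E1 v u"
    and nbr1: "\<And>v. v \<in> V1 \<Longrightarrow> \<exists>u\<in>V1. E1 v u"
  shows "td_coloring (nc_vertices V1 V2) (nc_edges E1 E2) (corona_coloring n f g)"
proof (rule td_coloring_if_adjacent_to_singleton_class)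
  show "corona_coloring n f g x \<noteq> corona_coloring n f g y"
    if "x \<in> nc_vertices V1 V2" "y \<in> nc_vertices V1 V2" "nc_edges E1 E2 x y" for x y
    by (rule corona_coloring_proper[OF irrefl1 irrefl2 that])
  fix x assume x: "x \<in> nc_vertices V1 V2"
  obtain u where u: "u \<in> V1" "nc_edges E1 E2 x (Inl u)"
    using nc_edges_neighbour_in_base[of E1 V1, OF sym1 nbr1 x] by blast
  have "Inl u \<in> nc_vertices V1 V2"
    using u(1) by (simp add: nc_vertices_def)
  with u corona_coloring_base_class_singleton[OF u(1)]
  show "\<exists>u\<in>nc_vertices V1 V2. nc_edges E1 E2 x u \<and>
      (\<forall>y\<in>nc_vertices V1 V2. corona_coloring n f g y = corona_coloring n f g u \<longrightarrow> y = u)"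
    by blast
qed

end

lemma corona_coloring_image:
  assumes "f ` V1 \<subseteq> {..<n}" "g ` V2 \<subseteq> {..<m}"
  shows "corona_coloring n f g ` nc_vertices V1 V2 \<subseteq> {..<n + m}"
  using assms by (force simp: nc_vertices_def)

theorem theorem1:
  fixes V1 :: "'a set" and E1 :: "'a \<Rightarrow> 'a \<Rightarrow> bool"
    and V2 :: "'b set" and E2 :: "'b \<Rightarrow> 'b \<Rightarrow> bool"
  assumes "connected_graph V1 E1" and "connected_graph V2 E2"
    and "card V1 \<ge> 2"
  shows "tdc_number (nc_vertices V1 V2) (nc_edges E1 E2) \<le> card V1 + card V2"
proof -
  have G1: "simple_graph V1 E1" and G2: "simple_graph V2 E2"
    using assms(1,2) by (simp_all add: connected_graph_def)
  obtain f where f: "bij_betw f V1 {..<card V1}"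
    using ex_bij_betw_finite_nat G1 lessThan_atLeast0 by (metis simple_graph_def)
  obtain g where g: "bij_betw g V2 {..<card V2}"
    using ex_bij_betw_finite_nat G2 lessThan_atLeast0 by (metis simple_graph_def)
  have f_inj: "inj_on f V1" and f_range: "f ` V1 \<subseteq> {..<card V1}"
    and g_inj: "inj_on g V2" and g_range: "g ` V2 \<subseteq> {..<card V2}"
    using f g by (auto simp: bij_betw_def)
  let ?c = "corona_coloring (card V1) f g"
  have "td_coloring (nc_vertices V1 V2) (nc_edges E1 E2) ?c"
    using G1 G2 connected_graph_has_neighbour[OF assms(1,3)]
    by (intro td_coloring_corona_coloring[OF f_inj f_range g_inj])
      (simp_all add: simple_graph_def)
  then have "tdc_number (nc_vertices V1 V2) (nc_edges E1 E2) \<le> card (?c ` nc_vertices V1 V2)"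
    by (rule tdc_number_le_card_colours)
  also have "\<dots> \<le> card V1 + card V2"
    using card_mono[OF _ corona_coloring_image[OF f_range g_range]] by simp
  finally show ?thesis .
qed

end
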